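(* Let $\mathbb{F}$ be a field, $0\neq h\in\mathbb{F}[x]$, and $A=A_h$ the unital $\mathbb{F}$-algebra generated by $x,\hat y$ with $\hat yx-x\hat y=h$. With the complex and maps defined in the context, the right $A$-module maps $s_{-1},s_0,s_1$ form a contracting homotopy, i.e. $\mu\circ s_{-1}=1_A$, $s_{-1}\circ\mu+d_0\circ s_0=1_{A\otimes A}$, $s_0\circ d_0+d_1\circ s_1=1_{A\otimes V\otimes A}$, and $s_1\circ d_1=1_{A\otimes R\otimes A}$.
   Context: $A$ has $\mathbb{F}$-basis $\{x^i\hat y^\ell\}$ and $\hat y f=f\hat y+\delta(f)$ for $f\in\mathbb{F}[x]$, where $\delta(f)=f'h$. Let $V=\mathbb{F}x\oplus\mathbb{F}\hat y\subseteq A$, $R=\mathbb{F}r$ one-dimensional, and all tensor products over $\mathbb{F}$. The complex of $A$-bimodules is $0\to A\otimes R\otimes A\xrightarrow{d_1}A\otimes V\otimes A\xrightarrow{d_0}A\otimes A\xrightarrow{\mu}A\to0$ with $\mu$ multiplication, $d_0(1\otimes v\otimes1)=v\otimes1-1\otimes v$, $d_1(1\otimes r\otimes1)=1\otimes\hat y\otimes x+\hat y\otimes x\otimes1-1\otimes x\otimes\hat y-x\otimes\hat y\otimes1-s_0(h\otimes1)$. Right $A$-module maps: $s_{-1}:A\to A\otimes A$, $s_{-1}(1)=1\otimes1$; $s_0:A\otimes A\to A\otimes V\otimes A$, $s_0(x^k\hat y^\ell\otimes1)=\sum_{i=0}^{k-1}x^i\otimes x\otimes x^{k-1-i}\hat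 y^\ell+\sum_{j=0}^{\ell-1}x^k\hat y^j\otimes\hat y\otimes\hat y^{\ell-1-j}$. $G:\mathbb{F}[x]\to A\otimes R\otimes A$ is linear with $G(x^k)=\sum_{i=0}^{k-1}x^i\otimes r\otimes x^{k-1-i}$. $s_1:A\otimes V\otimes A\to A\otimes R\otimes A$ is the right $A$-module map defined, for $f\in\mathbb{F}[x]$, $a,b\in A$, $\ell\geq0$, by: $s_1(a\otimes\hat y\otimes b)=0$; $s_1(f\hat y^\ell\otimes x\otimes a)=f\,s_1(\hat y^\ell\otimes x\otimes1)a$; $s_1(1\otimes x\otimes1)=0$; $s_1(\hat y^{\ell+1}\otimes x\otimes1)=\hat y\,s_1(\hat y^\ell\otimes x\otimes1)+\sum_{j=0}^\ell\binom{\ell}{j}G(\delta^j(x))\hat y^{\ell-j}$. *)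

theory Defs
  imports "HOL-Computational_Algebra.Polynomial" "HOL-Library.Poly_Mapping"
begin

text \<open>An element of A is a finitely supported
  coefficient function on the F-basis x^i yhat^l, indexed by (i,l).
  Tensor products over F of A, a finite-dimensional space with basis 'g, and A
  are finitely supported functions on triples ((i,l), g, (k,m)), the basis
  (x^i yhat^l) (x) g (x) (x^k yhat^m).\<close>

type_synonym 'a alg = "(nat \<times> nat) \<Rightarrow>\<^sub>0 'a"
type_synonym ('a, 'g) tens = "((nat \<times> nat) \<times> 'g \<times> (nat \<times> nat)) \<Rightarrow>\<^sub>0 'a"

text \<open>Basis of V = F x + F yhat, and of R = F r.\<close>
datatype vgen = Vx | Vy
datatype rgen = Rr

definition smul :: "'a::semiring_0 \<Rightarrow> ('k \<Rightarrow>\<^sub>0 'a) \<Rightarrow> ('k \<Rightarrow>\<^sub>0 'a)" where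
  "smul c p = Poly_Mapping.map (\<lambda>v. c * v) p"

definition lin :: "('k \<Rightarrow> ('j \<Rightarrow>\<^sub>0 'a::semiring_0)) \<Rightarrow> ('k \<Rightarrow>\<^sub>0 'a) \<Rightarrow> ('j \<Rightarrow>\<^sub>0 'a)" where
  "lin \<phi> p = (\<Sum>k\<in>Poly_Mapping.keys p. smul (Poly_Mapping.lookup p k) (\<phi> k))"

definition E :: "nat \<Rightarrow> nat \<Rightarrow> 'a::semiring_1 alg" where
  "E i l = Poly_Mapping.single (i, l) 1"

definition Eb :: "nat \<times> nat \<Rightarrow> 'a::semiring_1 alg" where
  "Eb u = E (fst u) (snd u)"

definition polyA :: "'a::comm_semiring_1 poly \<Rightarrow> 'a alg" where
  "polyA f = (\<Sum>n\<le>degree f. smul (coeff f n) (E n 0))"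

definition delta :: "'a::idom poly \<Rightarrow> 'a poly \<Rightarrow> 'a poly" where
  "delta h f = pderiv f * h"

text \<open>Product of basis elements:
  (x^i yhat^a)(x^k yhat^b) = sum_j binom(a,j) x^i delta^j(x^k) yhat^(a-j+b),
  which is the unique product determined by the basis and yhat f = f yhat + delta(f).\<close>
definition bmul :: "'a::idom poly \<Rightarrow> nat \<times> nat \<Rightarrow> nat \<times> nat \<Rightarrow> 'a alg" where
  "bmul h u v = (case u of (i, a) \<Rightarrow> case v of (k, b) \<Rightarrow>
     (\<Sum>j\<le>a. let g = (delta h ^^ j) (monom 1 k) in
        (\<Sum>n\<le>degree g. smul (of_nat (a choose j) * coeff g n) (E (i + n) (a - j + b)))))"

definition amul :: "'a::idom poly \<Rightarrow> 'a alg \<Rightarrow> 'a alg \<Rightarrow> 'a alg" where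
  "amul h p q = lin (\<lambda>u. lin (\<lambda>v. bmul h u v) q) p"

definition tens3 :: "'a::semiring_1 alg \<Rightarrow> 'g \<Rightarrow> 'a alg \<Rightarrow> ('a, 'g) tens" where
  "tens3 a g b = lin (\<lambda>u. lin (\<lambda>w. Poly_Mapping.single (u, g, w) 1) b) a"

definition lact :: "'a::idom poly \<Rightarrow> 'a alg \<Rightarrow> ('a, 'g) tens \<Rightarrow> ('a, 'g) tens" where
  "lact h a t = lin (\<lambda>(u, g, w). tens3 (amul h a (Eb u)) g (Eb w)) t"

definition ract :: "'a::idom poly \<Rightarrow> ('a, 'g) tens \<Rightarrow> 'a alg \<Rightarrow> ('a, 'g) tens" where
  "ract h t b = lin (\<lambda>(u, g, w). tens3 (Eb u) g (amul h (Eb w) b)) t"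

definition vel :: "vgen \<Rightarrow> 'a::semiring_1 alg" where
  "vel v = (case v of Vx \<Rightarrow> E 1 0 | Vy \<Rightarrow> E 0 1)"

definition mu :: "'a::idom poly \<Rightarrow> ('a, unit) tens \<Rightarrow> 'a alg" where
  "mu h t = lin (\<lambda>(u, _, w). amul h (Eb u) (Eb w)) t"

definition d0 :: "'a::idom poly \<Rightarrow> ('a, vgen) tens \<Rightarrow> ('a, unit) tens" where
  "d0 h t = lin (\<lambda>(u, v, w). tens3 (amul h (Eb u) (vel v)) () (Eb w)
                          - tens3 (Eb u) () (amul h (vel v) (Eb w))) t"

definition sm1 :: "'a::idom alg \<Rightarrow> ('a, unit) tens" where
  "sm1 a = tens3 (E 0 0) () a"

definition s0gen :: "nat \<Rightarrow> nat \<Rightarrow> ('a::idom, vgen) tens" where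
  "s0gen k l = (\<Sum>i<k. tens3 (E i 0) Vx (E (k - 1 - i) l))
             + (\<Sum>j<l. tens3 (E k j) Vy (E 0 (l - 1 - j)))"

definition s0 :: "'a::idom poly \<Rightarrow> ('a, unit) tens \<Rightarrow> ('a, vgen) tens" where
  "s0 h t = lin (\<lambda>(u, _, w). ract h (s0gen (fst u) (snd u)) (Eb w)) t"

definition d1gen :: "'a::idom poly \<Rightarrow> ('a, vgen) tens" where
  "d1gen h = tens3 (E 0 0) Vy (E 1 0) + tens3 (E 0 1) Vx (E 0 0)
           - tens3 (E 0 0) Vx (E 0 1) - tens3 (E 1 0) Vy (E 0 0)
           - s0 h (tens3 (polyA h) () (E 0 0))"

definition d1 :: "'a::idom poly \<Rightarrow> ('a, rgen) tens \<Rightarrow> ('a, vgen) tens" where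
  "d1 h t = lin (\<lambda>(u, _, w). lact h (Eb u) (ract h (d1gen h) (Eb w))) t"

definition Gmap :: "'a::idom poly \<Rightarrow> ('a, rgen) tens" where
  "Gmap f = (\<Sum>k\<le>degree f. smul (coeff f k) (\<Sum>i<k. tens3 (E i 0) Rr (E (k - 1 - i) 0)))"

text \<open>s_1(yhat^l (x) x (x) 1), defined recursively\<close>
primrec s1gen :: "'a::idom poly \<Rightarrow> nat \<Rightarrow> ('a, rgen) tens" where
  "s1gen h 0 = 0"
| "s1gen h (Suc l) = lact h (E 0 1) (s1gen h l)
     + (\<Sum>j\<le>l. smul (of_nat (l choose j)) (ract h (Gmap ((delta h ^^ j) [:0, 1:])) (E 0 (l - j))))"

definition s1 :: "'a::idom poly \<Rightarrow> ('a, vgen) tens \<Rightarrow> ('a, rgen) tens" where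
  "s1 h t = lin (\<lambda>(u, v, w). case v of
       Vy \<Rightarrow> 0
     | Vx \<Rightarrow> lact h (E (fst u) 0) (ract h (s1gen h (snd u)) (Eb w))) t"

end

theory Submission
  imports Defs
begin

(* Every map involved is F-linear, s_{-1}, s_0, s_1 are right A-module maps and d_0, d_1 are
   bimodule maps, so each identity has only to be checked on the tensors x^k yhat^l \<otimes> g \<otimes> c.
   Multiplication in A acts on this basis through the operators of left multiplication by x and
   by yhat, and associativity amounts to these commuting with right multiplication.

   The first two identities come from a telescoping sum. For the last two one computes how s_0 and
   s_1 interact with left multiplication:
     s_0(x u) = x s_0(u) + 1 \<otimes> x \<otimes> \<mu>(u),
     s_1(x t) = x s_1(t),
     s_0(yhat u) = yhat s_0(u) + 1 \<otimes> yhat \<otimes> \<mu>(u) - d_1(Ghat u),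
     s_1(yhat t) = yhat s_1(t) + Ghat(d_0 t),
   where Ghat(f yhat^l \<otimes> c) = G(f) yhat^l c; the last two rest on yhat x = x yhat + h and on
   G being a derivation, G(fg) = f G(g) + G(f) g. As \<mu> d_0 = 0 and d_0 d_1 = 0, the maps
   s_0 d_0 + d_1 s_1 and s_1 d_1 commute with left multiplication by x and yhat, so it is enough
   to evaluate them on 1 \<otimes> v \<otimes> c and 1 \<otimes> r \<otimes> c. *)

section \<open>Linear maps of finitely supported functions and of polynomials\<close>

lemma lookup_smul [simp]: "Poly_Mapping.lookup (smul c p) k = c * Poly_Mapping.lookup p k"
  by (simp add: smul_def Poly_Mapping.map.rep_eq when_def)

lemma module_smul: "module (smul :: 'a::comm_ring_1 \<Rightarrow> ('k \<Rightarrow>\<^sub>0 'a) \<Rightarrow> _)"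
  by unfold_locales (simp_all add: poly_mapping_eq_iff fun_eq_iff lookup_add algebra_simps)

lemma module_smult: "module (smult :: 'a::comm_ring_1 \<Rightarrow> 'a poly \<Rightarrow> _)"
  by unfold_locales (simp_all add: smult_add_right smult_add_left)

interpretation smul: module "smul :: 'a::comm_ring_1 \<Rightarrow> ('k \<Rightarrow>\<^sub>0 'a) \<Rightarrow> _"
  by (rule module_smul)

interpretation smul_pair: module_pair "smul :: 'a::comm_ring_1 \<Rightarrow> ('k \<Rightarrow>\<^sub>0 'a) \<Rightarrow> _"
    "smul :: 'a \<Rightarrow> ('j \<Rightarrow>\<^sub>0 'a) \<Rightarrow> _"
  by unfold_locales

interpretation smult_smul: module_pair "smult :: 'a::comm_ring_1 \<Rightarrow> 'a poly \<Rightarrow> _"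
    "smul :: 'a \<Rightarrow> ('k \<Rightarrow>\<^sub>0 'a) \<Rightarrow> _"
  by (intro module_pair.intro module_smult module_smul)

lemmas module_hom_comp = module_hom_compose[unfolded comp_def]

lemma lin_eq_sum_superset:
  fixes \<phi> :: "'k \<Rightarrow> ('j \<Rightarrow>\<^sub>0 'a::comm_ring_1)"
  assumes "finite S" "Poly_Mapping.keys p \<subseteq> S"
  shows "lin \<phi> p = (\<Sum>k\<in>S. smul (Poly_Mapping.lookup p k) (\<phi> k))"
  unfolding lin_def
  by (rule sum.mono_neutral_left) (use assms in \<open>auto simp: in_keys_iff\<close>)

lemma module_hom_lin: "module_hom smul smul (lin (\<phi> :: 'k \<Rightarrow> ('j \<Rightarrow>\<^sub>0 'a::comm_ring_1)))"
proof -
  have "lin \<phi> (p + q) = lin \<phi> p + lin \<phi> q" for p q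
  proof -
    let ?S = "Poly_Mapping.keys p \<union> Poly_Mapping.keys q"
    have "Poly_Mapping.keys (p + q) \<subseteq> ?S" by (rule keys_add)
    then show ?thesis
      by (simp add: lin_eq_sum_superset[of ?S] lookup_add smul.scale_left_distrib sum.distrib)
  qed
  moreover have "lin \<phi> (smul c p) = smul c (lin \<phi> p)" for c p
  proof -
    have "Poly_Mapping.keys (smul c p) \<subseteq> Poly_Mapping.keys p" by (auto simp: in_keys_iff)
    then show ?thesis
      by (simp add: lin_eq_sum_superset[of "Poly_Mapping.keys p"] smul.scale_sum_right)
  qed
  ultimately show ?thesis by (simp add: module_hom_iff module_smul)
qed

lemma lin_single [simp]:
  "lin \<phi> (Poly_Mapping.single k c) = smul c (\<phi> k :: 'j \<Rightarrow>\<^sub>0 'a::comm_ring_1)"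
  by (simp add: lin_eq_sum_superset[of "{k}"])

lemma lin_add_fun:
  "lin (\<lambda>k. \<phi> k + \<psi> k) p = lin \<phi> p + lin \<psi> (p :: 'k \<Rightarrow>\<^sub>0 'a::comm_ring_1)"
  by (simp add: lin_def smul.scale_right_distrib sum.distrib)

lemma lin_smul_fun: "lin (\<lambda>k. smul c (\<phi> k)) p = smul c (lin \<phi> (p :: 'k \<Rightarrow>\<^sub>0 'a::comm_ring_1))"
  by (simp add: lin_def smul.scale_sum_right mult.commute)

lemma module_hom_lin_fun:
  assumes "\<And>u. module_hom smul smul (F u)"
  shows "module_hom smul smul (\<lambda>c. lin (\<lambda>u. F u c) a)"
  by (simp add: module_hom_iff module_smul module_hom.add[OF assms] module_hom.scale[OF assms]
      lin_add_fun lin_smul_fun)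

lemma lin_single_one: "lin (\<lambda>k. Poly_Mapping.single k 1) p = (p :: 'k \<Rightarrow>\<^sub>0 'a::comm_ring_1)"
proof -
  have "finite I \<Longrightarrow>
      Poly_Mapping.lookup (\<Sum>i\<in>I. smul (Poly_Mapping.lookup p i) (Poly_Mapping.single i 1)) j
        = (if j \<in> I then Poly_Mapping.lookup p j else 0)" for I j
    by (induction I rule: finite_induct) (auto simp: lookup_single lookup_add when_def)
  then show ?thesis
    unfolding lin_def by (intro poly_mapping_eqI) (fastforce simp: in_keys_iff)
qed

lemma module_hom_eq_lin:
  assumes "module_hom smul smul L"
  shows "L p = lin (\<lambda>k. L (Poly_Mapping.single k 1)) p"
proof -
  have "L p = L (lin (\<lambda>k. Poly_Mapping.single k 1) p)" by (simp add: lin_single_one)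
  also have "\<dots> = lin (\<lambda>k. L (Poly_Mapping.single k 1)) p"
    unfolding lin_def by (simp add: module_hom.sum[OF assms] module_hom.scale[OF assms])
  finally show ?thesis .
qed

lemma module_hom_eqI_single:
  assumes "module_hom smul smul L" "module_hom smul smul M"
    and "\<And>k. L (Poly_Mapping.single k 1) = M (Poly_Mapping.single k 1)"
  shows "L p = M p"
  using module_hom_eq_lin[OF assms(1), of p] module_hom_eq_lin[OF assms(2), of p] assms(3) by simp

lemma module_hom_eqI_E:
  assumes "module_hom smul smul L" "module_hom smul smul M" "\<And>k l. L (E k l) = M (E k l)"
  shows "L p = M (p :: 'a::comm_ring_1 alg)"
proof (rule module_hom_eqI_single[OF assms(1,2)])
  fix u :: "nat \<times> nat"
  show "L (Poly_Mapping.single u 1) = M (Poly_Mapping.single u 1)"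
    using assms(3)[of "fst u" "snd u"] by (simp add: E_def)
qed

lemma lin_lin: "lin \<phi> (lin \<psi> p) = lin (\<lambda>k. lin \<phi> (\<psi> k)) (p :: 'k \<Rightarrow>\<^sub>0 'a::comm_ring_1)"
  by (simp add: lin_def[of \<psi>] module_hom.sum[OF module_hom_lin] module_hom.scale[OF module_hom_lin])
    (simp add: lin_def)

definition poly_lin :: "(nat \<Rightarrow> ('k \<Rightarrow>\<^sub>0 'a::comm_ring_1)) \<Rightarrow> 'a poly \<Rightarrow> ('k \<Rightarrow>\<^sub>0 'a)" where
  "poly_lin F f = (\<Sum>n\<le>degree f. smul (coeff f n) (F n))"

lemma poly_lin_eq_sum_superset:
  "degree f \<le> N \<Longrightarrow> poly_lin F f = (\<Sum>n\<le>N. smul (coeff f n) (F n))"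
  unfolding poly_lin_def by (rule sum.mono_neutral_left) (auto simp: coeff_eq_0)

lemma module_hom_poly_lin: "module_hom smult smul (poly_lin F)"
proof -
  have "poly_lin F (f + g) = poly_lin F f + poly_lin F g" for f g
  proof -
    have "degree (f + g) \<le> max (degree f) (degree g)" by (rule degree_add_le_max)
    then show ?thesis
      by (simp add: poly_lin_eq_sum_superset[of _ "max (degree f) (degree g)"]
          smul.scale_left_distrib sum.distrib)
  qed
  moreover have "poly_lin F (smult c f) = smul c (poly_lin F f)" for c f
    unfolding poly_lin_eq_sum_superset[OF degree_smult_le]
    by (simp add: smul.scale_sum_right poly_lin_def)
  ultimately show ?thesis by (simp add: module_hom_iff module_smul module_smult)
qed

lemma poly_lin_monom: "poly_lin F (monom c n) = smul c (F n)"
proof -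
  have "poly_lin F (monom c n) = (\<Sum>m\<le>n. smul (coeff (monom c n) m) (F m))"
    by (rule poly_lin_eq_sum_superset) (rule degree_monom_le)
  also have "\<dots> = (\<Sum>m\<le>n. if m = n then smul c (F n) else 0)"
    by (rule sum.cong) auto
  finally show ?thesis by simp
qed

lemma poly_lin_add_fun: "poly_lin (\<lambda>n. F n + G n) f = poly_lin F f + poly_lin G f"
  by (simp add: poly_lin_def smul.scale_right_distrib sum.distrib)

lemma poly_lin_smul_fun: "poly_lin (\<lambda>n. smul c (F n)) f = smul c (poly_lin F f)"
  by (simp add: poly_lin_def smul.scale_sum_right mult.commute)

lemma module_hom_poly_lin_comm:
  "module_hom smul smul L \<Longrightarrow> L (poly_lin F f) = poly_lin (\<lambda>n. L (F n)) f"
  by (simp add: poly_lin_def module_hom.sum module_hom.scale)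

lemma module_hom_eq_poly_lin:
  assumes "module_hom smult smul P"
  shows "P f = poly_lin (\<lambda>n. P (monom 1 n)) f"
proof -
  have "P f = P (\<Sum>i\<le>degree f. smult (coeff f i) (monom 1 i))"
    by (simp add: poly_as_sum_of_monoms smult_monom)
  then show ?thesis
    by (simp add: module_hom.sum[OF assms] module_hom.scale[OF assms] poly_lin_def)
qed

lemma module_hom_poly_eqI:
  assumes "module_hom smult smul P" "module_hom smult smul Q" "\<And>n. P (monom 1 n) = Q (monom 1 n)"
  shows "P f = Q f"
  using module_hom_eq_poly_lin[OF assms(1), of f] module_hom_eq_poly_lin[OF assms(2), of f] assms(3)
  by simp

lemma module_hom_mult_left: "module_hom smult smult (\<lambda>f. g * f :: 'a::comm_ring_1 poly)"
  by (simp add: module_hom_iff module_smult distrib_left)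

lemma module_hom_mult_right: "module_hom smult smult (\<lambda>f. f * g :: 'a::comm_ring_1 poly)"
  by (simp add: module_hom_iff module_smult distrib_right)

lemma module_hom_delta: "module_hom smult smult (delta h)"
  by (simp add: module_hom_iff module_smult delta_def pderiv_add pderiv_smult distrib_right)

lemma delta_mult: "delta h (f * g) = f * delta h g + g * delta h f"
  by (simp add: delta_def pderiv_mult algebra_simps)

lemma delta_monom_add:
  "delta h (monom 1 (i + k)) = monom 1 i * delta h (monom 1 k) + monom 1 k * delta h (monom 1 i)"
proof -
  have "monom 1 (i + k) = monom 1 i * (monom 1 k :: 'a poly)" by (simp add: mult_monom)
  then show ?thesis by (simp add: delta_mult)
qed

lemma monom_1_Suc_0: "monom 1 (Suc 0) = [:0, 1:]"
  by (simp add: monom_Suc monom_0)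

lemma delta_one [simp]: "delta h 1 = 0"
  by (simp add: delta_def)

lemma delta_x: "delta h (monom 1 (Suc 0)) = h"
  by (simp add: delta_def pderiv_monom)

lemma sum_choose_Suc_smul:
  fixes Y :: "nat \<Rightarrow> ('k \<Rightarrow>\<^sub>0 'a::comm_ring_1)"
  shows "(\<Sum>j\<le>a. smul (of_nat (a choose j)) (Y j)) + (\<Sum>j\<le>a. smul (of_nat (a choose j)) (Y (Suc j)))
       = (\<Sum>j\<le>Suc a. smul (of_nat (Suc a choose j)) (Y j))"
proof -
  have "(\<Sum>j\<le>a. smul (of_nat (a choose j)) (Y j)) = (\<Sum>j\<le>Suc a. smul (of_nat (a choose j)) (Y j))"
    by (simp add: binomial_eq_0)
  also have "\<dots> = Y 0 + (\<Sum>j\<le>a. smul (of_nat (a choose Suc j)) (Y (Suc j)))"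
    by (subst sum.atMost_Suc_shift) simp
  finally show ?thesis
    by (subst sum.atMost_Suc_shift) (simp add: smul.scale_left_distrib sum.distrib add_ac)
qed

section \<open>The algebra A_h\<close>

definition lmul_x :: "'a::idom alg \<Rightarrow> 'a alg" where
  "lmul_x = lin (\<lambda>(i, l). E (Suc i) l)"

definition poly_yhat :: "'a::idom poly \<Rightarrow> nat \<Rightarrow> 'a alg" where
  "poly_yhat f m = poly_lin (\<lambda>n. E n m) f"

definition lmul_y :: "'a::idom poly \<Rightarrow> 'a alg \<Rightarrow> 'a alg" where
  "lmul_y h = lin (\<lambda>(i, l). E i (Suc l) + poly_yhat (delta h (monom 1 i)) l)"

definition lmul_poly :: "'a::idom poly \<Rightarrow> 'a alg \<Rightarrow> 'a alg" where
  "lmul_poly f s = poly_lin (\<lambda>n. (lmul_x ^^ n) s) f"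

lemma module_hom_lmul_x: "module_hom smul smul lmul_x"
  by (simp add: lmul_x_def module_hom_lin)

lemma module_hom_lmul_y: "module_hom smul smul (lmul_y h)"
  by (simp add: lmul_y_def module_hom_lin)

lemma module_hom_funpow:
  fixes L :: "('k \<Rightarrow>\<^sub>0 'a::comm_ring_1) \<Rightarrow> ('k \<Rightarrow>\<^sub>0 'a)"
  shows "module_hom smul smul L \<Longrightarrow> module_hom smul smul (L ^^ n)"
proof (induction n)
  case 0
  show ?case using smul.module_hom_ident by simp
next
  case (Suc n)
  then show ?case using module_hom_comp[of smul smul "L ^^ n" smul L] by simp
qed

lemma module_hom_funpow_lmul_x: "module_hom smul smul (lmul_x ^^ n)"
  by (intro module_hom_funpow module_hom_lmul_x)

lemma module_hom_funpow_lmul_y: "module_hom smul smul (lmul_y h ^^ n)"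
  by (intro module_hom_funpow module_hom_lmul_y)

lemma lmul_x_E [simp]: "lmul_x (E i a) = E (Suc i) a"
  by (simp add: lmul_x_def E_def)

lemma funpow_lmul_x_E [simp]: "(lmul_x ^^ n) (E i a) = E (n + i) a"
  by (induction n) simp_all

lemma module_hom_poly_yhat: "module_hom smult smul (\<lambda>f. poly_yhat f m)"
  by (simp add: poly_yhat_def module_hom_poly_lin)

lemma poly_yhat_monom [simp]: "poly_yhat (monom c n) m = smul c (E n m)"
  by (simp add: poly_yhat_def poly_lin_monom)

lemma funpow_lmul_x_poly_yhat: "(lmul_x ^^ n) (poly_yhat f m) = poly_yhat (monom 1 n * f) m"
  by (rule module_hom_poly_eqI[where f = f])
    (simp_all add: module_hom_comp[OF module_hom_poly_yhat module_hom_funpow_lmul_x]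
      module_hom_comp[OF module_hom_mult_left module_hom_poly_yhat] mult_monom)

lemma lmul_y_E: "lmul_y h (E k m) = E k (Suc m) + poly_yhat (delta h (monom 1 k)) m"
  by (simp add: lmul_y_def E_def)

lemma lmul_y_poly_yhat: "lmul_y h (poly_yhat f m) = poly_yhat f (Suc m) + poly_yhat (delta h f) m"
  by (rule module_hom_poly_eqI[where f = f])
    (simp_all add: module_hom_comp[OF module_hom_poly_yhat module_hom_lmul_y] lmul_y_E
      smult_smul.module_hom_add[OF module_hom_poly_yhat
        module_hom_comp[OF module_hom_delta module_hom_poly_yhat]])

lemma funpow_lmul_y_E:
  "(lmul_y h ^^ a) (E k b) =
     (\<Sum>j\<le>a. smul (of_nat (a choose j)) (poly_yhat ((delta h ^^ j) (monom 1 k)) (a - j + b)))"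
proof (induction a)
  case 0
  then show ?case by simp
next
  case (Suc a)
  define Y where "Y j = poly_yhat ((delta h ^^ j) (monom 1 k)) (Suc a - j + b)" for j
  have "(lmul_y h ^^ Suc a) (E k b) = (\<Sum>j\<le>a. smul (of_nat (a choose j)) (Y j + Y (Suc j)))"
    by (simp add: Suc.IH module_hom.sum[OF module_hom_lmul_y] module_hom.scale[OF module_hom_lmul_y]
        lmul_y_poly_yhat Y_def Suc_diff_le)
  also have "\<dots> = (\<Sum>j\<le>Suc a. smul (of_nat (Suc a choose j)) (Y j))"
    by (simp add: smul.scale_right_distrib sum.distrib sum_choose_Suc_smul)
  finally show ?case by (simp add: Y_def)
qed

lemma single_E: "Poly_Mapping.single (i, a) 1 = E i a"
  by (simp add: E_def)

lemma bmul_eq_funpow: "bmul h (i, a) v = (lmul_x ^^ i) ((lmul_y h ^^ a) (Poly_Mapping.single v 1))"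
proof -
  obtain k b where v: "v = (k, b)" by fastforce
  have x_poly_yhat: "(lmul_x ^^ i) (poly_yhat g m) = (\<Sum>n\<le>degree g. smul (coeff g n) (E (i + n) m))"
      for g m
    unfolding poly_yhat_def module_hom_poly_lin_comm[OF module_hom_funpow_lmul_x]
    by (simp add: poly_lin_def)
  show ?thesis
    unfolding v single_E funpow_lmul_y_E module_hom.sum[OF module_hom_funpow_lmul_x]
      module_hom.scale[OF module_hom_funpow_lmul_x]
    by (simp add: bmul_def Let_def smul.scale_sum_right x_poly_yhat)
qed

lemma amul_E: "amul h (E i a) q = (lmul_x ^^ i) ((lmul_y h ^^ a) q)"
  using module_hom_eq_lin[OF module_hom_comp[OF module_hom_funpow_lmul_y module_hom_funpow_lmul_x],
      where p = q]
  by (simp add: amul_def E_def bmul_eq_funpow[abs_def])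

lemma module_hom_amul_left: "module_hom smul smul (\<lambda>p. amul h p q)"
  by (simp add: amul_def module_hom_lin)

lemma module_hom_amul_right: "module_hom smul smul (\<lambda>q. amul h p q)"
  unfolding amul_def by (intro module_hom_lin_fun module_hom_lin)

lemma module_hom_lmul_poly: "module_hom smul smul (lmul_poly f)"
  by (simp add: module_hom_iff module_smul lmul_poly_def poly_lin_add_fun poly_lin_smul_fun
      module_hom.add[OF module_hom_funpow_lmul_x] module_hom.scale[OF module_hom_funpow_lmul_x])

lemma module_hom_lmul_poly_left: "module_hom smult smul (\<lambda>f. lmul_poly f s)"
  by (simp add: lmul_poly_def module_hom_poly_lin)

lemma lmul_poly_monom [simp]: "lmul_poly (monom 1 n) s = (lmul_x ^^ n) s"
  by (simp add: lmul_poly_def poly_lin_monom)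

lemma lmul_poly_E: "lmul_poly f (E k b) = poly_yhat (f * monom 1 k) b"
  by (rule module_hom_poly_eqI[where f = f])
    (simp_all add: module_hom_lmul_poly_left mult_monom
      module_hom_comp[OF module_hom_mult_right module_hom_poly_yhat])

lemma lmul_y_funpow_lmul_x:
  "lmul_y h ((lmul_x ^^ i) s) = (lmul_x ^^ i) (lmul_y h s) + lmul_poly (delta h (monom 1 i)) s"
  by (rule module_hom_eqI_E[OF module_hom_comp[OF module_hom_funpow_lmul_x module_hom_lmul_y]
        smul_pair.module_hom_add[OF module_hom_comp[OF module_hom_lmul_y module_hom_funpow_lmul_x]
          module_hom_lmul_poly]])
    (simp add: lmul_y_E delta_monom_add module_hom.add[OF module_hom_funpow_lmul_x]
      module_hom.add[OF module_hom_poly_yhat] funpow_lmul_x_poly_yhat lmul_poly_E mult.commute add_ac)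

lemma amul_lmul_x: "amul h (lmul_x q) r = lmul_x (amul h q r)"
  by (rule module_hom_eqI_E[OF module_hom_comp[OF module_hom_lmul_x module_hom_amul_left]
        module_hom_comp[OF module_hom_amul_left module_hom_lmul_x]])
    (simp add: amul_E)

lemma amul_poly_yhat: "amul h (poly_yhat f a) r = lmul_poly f ((lmul_y h ^^ a) r)"
  by (rule module_hom_poly_eqI[where f = f])
    (simp_all add: module_hom_comp[OF module_hom_poly_yhat module_hom_amul_left]
      module_hom_lmul_poly_left amul_E)

lemma amul_lmul_y: "amul h (lmul_y h q) r = lmul_y h (amul h q r)"
  by (rule module_hom_eqI_E[OF module_hom_comp[OF module_hom_lmul_y module_hom_amul_left]
        module_hom_comp[OF module_hom_amul_left module_hom_lmul_y]])
    (simp add: amul_E lmul_y_E module_hom.add[OF module_hom_amul_left] amul_poly_yhat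
      lmul_y_funpow_lmul_x)

lemma amul_assoc: "amul h (amul h p q) r = amul h p (amul h q r)"
proof -
  have funpow_amul:
    "amul h ((lmul_x ^^ i) ((lmul_y h ^^ a) q)) r = (lmul_x ^^ i) ((lmul_y h ^^ a) (amul h q r))"
    for i a
    by (induction i) (induction a, simp_all add: amul_lmul_x amul_lmul_y)
  show ?thesis
    by (rule module_hom_eqI_E[OF module_hom_comp[OF module_hom_amul_left module_hom_amul_left]
          module_hom_amul_left])
      (simp add: amul_E funpow_amul)
qed

lemma funpow_lmul_y_E0: "(lmul_y h ^^ a) (E 0 m) = E 0 (a + m)"
  by (induction a) (simp_all add: lmul_y_E module_hom.zero[OF module_hom_poly_yhat])

lemma amul_E_E0 [simp]: "amul h (E k l) (E 0 m) = E k (l + m)"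
  by (simp add: amul_E funpow_lmul_y_E0)

lemma amul_E0_E [simp]: "amul h (E i 0) (E k b) = E (i + k) b"
  by (simp add: amul_E)

lemma amul_one_left [simp]: "amul h (E 0 0) q = q"
  by (simp add: amul_E)

lemma amul_one_right [simp]: "amul h p (E 0 0) = p"
  by (rule module_hom_eqI_E[OF module_hom_amul_left smul.module_hom_ident]) (simp add: amul_E_E0)

lemma polyA_eq_poly_yhat: "polyA f = poly_yhat f 0"
  by (simp add: polyA_def poly_yhat_def poly_lin_def)

lemma module_hom_polyA: "module_hom smult smul (polyA :: 'a::idom poly \<Rightarrow> _)"
  using module_hom_poly_yhat[of 0] by (simp add: polyA_eq_poly_yhat[abs_def])

lemma polyA_monom [simp]: "polyA (monom 1 n) = (E n 0 :: 'a::idom alg)"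
  by (simp add: polyA_eq_poly_yhat)

lemma amul_polyA: "amul h (polyA f) q = lmul_poly f q"
  by (simp add: polyA_eq_poly_yhat amul_poly_yhat)

lemma amul_poly_yhat_E0: "amul h (poly_yhat g m) c = amul h (polyA g) (amul h (E 0 m) c)"
  by (simp add: amul_poly_yhat amul_polyA amul_E)

abbreviation xA :: "'a::semiring_1 alg" where "xA \<equiv> E (Suc 0) 0"
abbreviation yA :: "'a::semiring_1 alg" where "yA \<equiv> E 0 (Suc 0)"

lemma amul_xA_left: "amul h xA q = lmul_x q"
  by (simp add: amul_E)

lemma amul_yA_left: "amul h yA q = lmul_y h q"
  by (simp add: amul_E)

lemma amul_yA_xA_left: "amul h yA (amul h xA q) = amul h xA (amul h yA q) + amul h (polyA h) q"
  using lmul_y_funpow_lmul_x[of h 1 q] by (simp add: amul_yA_left amul_xA_left amul_polyA delta_x)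

lemma amul_yA_xA: "amul h yA xA = amul h xA yA + polyA h"
  using amul_yA_xA_left[where q = "E 0 0"] by simp

lemma amul_E_xA: "amul h (E k l) xA =
    (\<Sum>j\<le>l. smul (of_nat (l choose j)) (poly_yhat (monom 1 k * (delta h ^^ j) [:0, 1:]) (l - j)))"
proof -
  have "amul h (E k l) xA = amul h (E k 0) (amul h (E 0 l) xA)"
    by (simp flip: amul_assoc)
  then show ?thesis
    by (simp add: amul_E funpow_lmul_y_E monom_1_Suc_0 module_hom.sum[OF module_hom_funpow_lmul_x]
        module_hom.scale[OF module_hom_funpow_lmul_x] funpow_lmul_x_poly_yhat)
qed

section \<open>The bimodules A \<otimes> M \<otimes> A and the maps of the complex\<close>

lemma Eb_single: "Eb u = Poly_Mapping.single u 1"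
  by (simp add: Eb_def E_def)

lemma tens3_single:
  "tens3 (Eb u) g (Eb w) = (Poly_Mapping.single (u, g, w) 1 :: ('a::comm_ring_1, 'g) tens)"
  by (simp add: tens3_def Eb_single)

lemma module_hom_tens3_left: "module_hom smul smul (\<lambda>a. tens3 a g b :: ('a::comm_ring_1, 'g) tens)"
  unfolding tens3_def by (rule module_hom_lin)

lemma module_hom_tens3_right: "module_hom smul smul (\<lambda>b. tens3 a g b :: ('a::comm_ring_1, 'g) tens)"
  unfolding tens3_def by (intro module_hom_lin_fun module_hom_lin)

lemmas tens3_zero_right [simp] = module_hom.zero[OF module_hom_tens3_right]

lemma lin_tens3_E:
  assumes "\<And>w. \<phi> ((k, l), g, w) = \<Phi> (Eb w)" "module_hom smul smul \<Phi>"
  shows "lin \<phi> (tens3 (E k l) g c) = (\<Phi> c :: 'j \<Rightarrow>\<^sub>0 'a::comm_ring_1)"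
proof -
  have "tens3 (E k l) g c = lin (\<lambda>w. Poly_Mapping.single ((k, l), g, w) 1) c"
    by (simp add: tens3_def E_def)
  then have "lin \<phi> (tens3 (E k l) g c) = lin (\<lambda>w. \<Phi> (Eb w)) c"
    by (simp add: lin_lin assms(1))
  also have "\<dots> = \<Phi> c"
    using module_hom_eq_lin[OF assms(2), of c] by (simp add: Eb_single)
  finally show ?thesis .
qed

lemma lin_tens3:
  assumes "\<And>u g w. \<phi> (u, g, w) = \<Psi> (Eb u) g (Eb w)"
    and "\<And>g c. module_hom smul smul (\<lambda>a. \<Psi> a g c)" "\<And>a g. module_hom smul smul (\<lambda>c. \<Psi> a g c)"
  shows "lin \<phi> (tens3 a g c) = (\<Psi> a g c :: 'k \<Rightarrow>\<^sub>0 'a::comm_ring_1)"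
  by (rule module_hom_eqI_E[OF module_hom_comp[OF module_hom_tens3_left module_hom_lin] assms(2)])
    (simp add: lin_tens3_E[OF _ assms(3)] assms(1) Eb_def)

lemma tens_eqI:
  fixes L M :: "('a::comm_ring_1, 'g) tens \<Rightarrow> ('k \<Rightarrow>\<^sub>0 'a)"
  assumes "module_hom smul smul L" "module_hom smul smul M"
    and "\<And>k l g c. L (tens3 (E k l) g c) = M (tens3 (E k l) g c)"
  shows "L t = M t"
proof (rule module_hom_eqI_single[OF assms(1,2)])
  fix v :: "(nat \<times> nat) \<times> 'g \<times> (nat \<times> nat)"
  obtain k l g w where "v = ((k, l), g, w)" by (metis prod.exhaust)
  then show "L (Poly_Mapping.single v 1) = M (Poly_Mapping.single v 1)"
    using assms(3)[of k l g "Eb w"] by (simp flip: tens3_single add: Eb_def)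
qed

lemma lact_tens3: "lact h a (tens3 b g c) = (tens3 (amul h a b) g c :: ('a::idom, 'g) tens)"
  unfolding lact_def
  by (rule lin_tens3)
    (simp_all add: module_hom_comp[OF module_hom_amul_right module_hom_tens3_left]
      module_hom_tens3_right)

lemma ract_tens3: "ract h (tens3 b g c) a = (tens3 b g (amul h c a) :: ('a::idom, 'g) tens)"
  unfolding ract_def
  by (rule lin_tens3)
    (simp_all add: module_hom_comp[OF module_hom_amul_left module_hom_tens3_right]
      module_hom_tens3_left)

lemma module_hom_lact: "module_hom smul smul (lact h a :: ('a::idom, 'g) tens \<Rightarrow> _)"
  unfolding lact_def[abs_def] by (rule module_hom_lin)

lemma module_hom_ract: "module_hom smul smul (\<lambda>t. ract h t b :: ('a::idom, 'g) tens)"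
  unfolding ract_def by (rule module_hom_lin)

lemmas lact_add = module_hom.add[OF module_hom_lact]
lemmas lact_diff = module_hom.diff[OF module_hom_lact]
lemmas lact_zero [simp] = module_hom.zero[OF module_hom_lact]
lemmas ract_add = module_hom.add[OF module_hom_ract]
lemmas ract_diff = module_hom.diff[OF module_hom_ract]
lemmas ract_zero [simp] = module_hom.zero[OF module_hom_ract]

lemma module_hom_lact_left: "module_hom smul smul (\<lambda>a. lact h a t :: ('a::idom, 'g) tens)"
  unfolding lact_def
proof (rule module_hom_lin_fun)
  fix v :: "(nat \<times> nat) \<times> 'g \<times> (nat \<times> nat)"
  obtain u g w where "v = (u, g, w)" by (metis prod.exhaust)
  then show "module_hom smul smul (\<lambda>a. case v of (u, g, w) \<Rightarrow> tens3 (amul h a (Eb u)) g (Eb w))"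
    by (simp add: module_hom_comp[OF module_hom_amul_left module_hom_tens3_left])
qed

lemma module_hom_ract_right: "module_hom smul smul (\<lambda>b. ract h t b :: ('a::idom, 'g) tens)"
  unfolding ract_def
proof (rule module_hom_lin_fun)
  fix v :: "(nat \<times> nat) \<times> 'g \<times> (nat \<times> nat)"
  obtain u g w where "v = (u, g, w)" by (metis prod.exhaust)
  then show "module_hom smul smul (\<lambda>b. case v of (u, g, w) \<Rightarrow> tens3 (Eb u) g (amul h (Eb w) b))"
    by (simp add: module_hom_comp[OF module_hom_amul_right module_hom_tens3_right])
qed

lemma lact_lact: "lact h a (lact h b t) = (lact h (amul h a b) t :: ('a::idom, 'g) tens)"
  by (rule tens_eqI[OF module_hom_comp[OF module_hom_lact module_hom_lact] module_hom_lact])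
    (simp add: lact_tens3 amul_assoc)

lemma ract_ract: "ract h (ract h t a) b = (ract h t (amul h a b) :: ('a::idom, 'g) tens)"
  by (rule tens_eqI[OF module_hom_comp[OF module_hom_ract module_hom_ract] module_hom_ract])
    (simp add: ract_tens3 amul_assoc)

lemma lact_ract: "lact h a (ract h t b) = (ract h (lact h a t) b :: ('a::idom, 'g) tens)"
  by (rule tens_eqI[OF module_hom_comp[OF module_hom_ract module_hom_lact]
        module_hom_comp[OF module_hom_lact module_hom_ract]])
    (simp add: ract_tens3 lact_tens3)

lemma lact_one [simp]: "lact h (E 0 0) t = (t :: ('a::idom, 'g) tens)"
  by (rule tens_eqI[OF module_hom_lact smul.module_hom_ident]) (simp add: lact_tens3)

lemma ract_one [simp]: "ract h t (E 0 0) = (t :: ('a::idom, 'g) tens)"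
  by (rule tens_eqI[OF module_hom_ract smul.module_hom_ident]) (simp add: ract_tens3)

(* Ghat(x^k yhat^l \<otimes> c) = G(x^k) yhat^l c is the correction term in the commutation of s_0 and
   s_1 with left multiplication by yhat (s0_lact_y, s1_lact_y). *)
definition Ghat :: "'a::idom poly \<Rightarrow> ('a, unit) tens \<Rightarrow> ('a, rgen) tens" where
  "Ghat h t = lin (\<lambda>(u, _, w). ract h (Gmap (monom 1 (fst u))) (amul h (E 0 (snd u)) (Eb w))) t"

lemma module_hom_mu: "module_hom smul smul (mu h)"
  unfolding mu_def[abs_def] by (rule module_hom_lin)

lemma module_hom_d0: "module_hom smul smul (d0 h)"
  unfolding d0_def[abs_def] by (rule module_hom_lin)

lemma module_hom_d1: "module_hom smul smul (d1 h)"
  unfolding d1_def[abs_def] by (rule module_hom_lin)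

lemmas d1_zero [simp] = module_hom.zero[OF module_hom_d1]

lemma module_hom_s0: "module_hom smul smul (s0 h)"
  unfolding s0_def[abs_def] by (rule module_hom_lin)

lemma module_hom_s1: "module_hom smul smul (s1 h)"
  unfolding s1_def[abs_def] by (rule module_hom_lin)

lemma module_hom_Ghat: "module_hom smul smul (Ghat h)"
  unfolding Ghat_def[abs_def] by (rule module_hom_lin)

lemma module_hom_sm1: "module_hom smul smul sm1"
  unfolding sm1_def[abs_def] by (rule module_hom_tens3_right)

lemma vel_simps [simp]: "vel Vx = xA" "vel Vy = yA"
  by (simp_all add: vel_def)

lemma mu_tens3: "mu h (tens3 a g c) = amul h a c"
  unfolding mu_def by (rule lin_tens3) (simp_all add: module_hom_amul_left module_hom_amul_right)

lemma d0_tens3: "d0 h (tens3 a v c) = tens3 (amul h a (vel v)) () c - tens3 a () (amul h (vel v) c)"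
  unfolding d0_def
  by (rule lin_tens3)
    (simp_all add: smul_pair.module_hom_sub module_hom_tens3_left module_hom_tens3_right
      module_hom_comp[OF module_hom_amul_left module_hom_tens3_left]
      module_hom_comp[OF module_hom_amul_right module_hom_tens3_right])

lemma d1_tens3: "d1 h (tens3 a g c) = lact h a (ract h (d1gen h) c)"
  unfolding d1_def
  by (rule lin_tens3)
    (simp_all add: module_hom_lact_left module_hom_comp[OF module_hom_ract_right module_hom_lact])

lemma s0_tens3_E: "s0 h (tens3 (E k l) g c) = ract h (s0gen k l) c"
  unfolding s0_def by (rule lin_tens3_E) (simp_all add: module_hom_ract_right)

lemma s1_tens3_E:
  "s1 h (tens3 (E k l) v c) = (case v of Vx \<Rightarrow> lact h (E k 0) (ract h (s1gen h l) c) | Vy \<Rightarrow> 0)"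
  unfolding s1_def
  by (rule lin_tens3_E; cases v)
    (simp_all add: module_hom_comp[OF module_hom_ract_right module_hom_lact]
      smul_pair.module_hom_zero)

lemma Ghat_tens3_E: "Ghat h (tens3 (E k l) g c) = ract h (Gmap (monom 1 k)) (amul h (E 0 l) c)"
  unfolding Ghat_def
  by (rule lin_tens3_E)
    (simp_all add: module_hom_comp[OF module_hom_amul_right module_hom_ract_right])

lemma s1_tens3_y [simp]: "s1 h (tens3 a Vy c) = 0"
  by (rule module_hom_eqI_E[OF module_hom_comp[OF module_hom_tens3_left module_hom_s1]
        smul_pair.module_hom_zero])
    (simp add: s1_tens3_E)

lemma d0_lact: "d0 h (lact h b t) = lact h b (d0 h t)"
  by (rule tens_eqI[OF module_hom_comp[OF module_hom_lact module_hom_d0]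
        module_hom_comp[OF module_hom_d0 module_hom_lact]])
    (simp add: lact_tens3 d0_tens3 lact_diff amul_assoc)

lemma d0_ract: "d0 h (ract h t b) = ract h (d0 h t) b"
  by (rule tens_eqI[OF module_hom_comp[OF module_hom_ract module_hom_d0]
        module_hom_comp[OF module_hom_d0 module_hom_ract]])
    (simp add: ract_tens3 d0_tens3 ract_diff amul_assoc)

lemma d1_lact: "d1 h (lact h b t) = lact h b (d1 h t)"
  by (rule tens_eqI[OF module_hom_comp[OF module_hom_lact module_hom_d1]
        module_hom_comp[OF module_hom_d1 module_hom_lact]])
    (simp add: lact_tens3 d1_tens3 lact_lact)

lemma s0_ract: "s0 h (ract h t b) = ract h (s0 h t) b"
  by (rule tens_eqI[OF module_hom_comp[OF module_hom_ract module_hom_s0]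
        module_hom_comp[OF module_hom_s0 module_hom_ract]])
    (simp add: ract_tens3 s0_tens3_E ract_ract)

lemma s1_ract: "s1 h (ract h t b) = ract h (s1 h t) b"
  by (rule tens_eqI[OF module_hom_comp[OF module_hom_ract module_hom_s1]
        module_hom_comp[OF module_hom_s1 module_hom_ract]])
    (simp add: ract_tens3 s1_tens3_E ract_ract lact_ract split: vgen.split)

lemma mu_d0: "mu h (d0 h t) = 0"
  by (rule tens_eqI[OF module_hom_comp[OF module_hom_d0 module_hom_mu] smul_pair.module_hom_zero])
    (simp add: d0_tens3 module_hom.diff[OF module_hom_mu] mu_tens3 amul_assoc)

lemma mu_sm1: "mu h (sm1 a) = a"
  by (simp add: sm1_def mu_tens3)

lemma d0_s0gen: "d0 h (s0gen k l) = tens3 (E k l) () (E 0 0) - tens3 (E 0 0) () (E k l)"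
proof -
  define f where "f i = (tens3 (E i 0) () (E (k - i) l) :: ('a, unit) tens)" for i
  define g where "g j = (tens3 (E k j) () (E 0 (l - j)) :: ('a, unit) tens)" for j
  have x_part: "d0 h (\<Sum>i<k. tens3 (E i 0) Vx (E (k - 1 - i) l)) = (\<Sum>i<k. f (Suc i) - f i)"
    unfolding module_hom.sum[OF module_hom_d0]
    by (rule sum.cong) (auto simp: d0_tens3 f_def Suc_diff_Suc)
  have y_part: "d0 h (\<Sum>j<l. tens3 (E k j) Vy (E 0 (l - 1 - j))) = (\<Sum>j<l. g (Suc j) - g j)"
    unfolding module_hom.sum[OF module_hom_d0]
    by (rule sum.cong) (auto simp: d0_tens3 g_def Suc_diff_Suc)
  show ?thesis
    unfolding s0gen_def module_hom.add[OF module_hom_d0] x_part y_part sum_lessThan_telescope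
    by (simp add: f_def g_def)
qed

lemma sm1_mu_add_d0_s0: "sm1 (mu h t) + d0 h (s0 h t) = t"
  by (rule tens_eqI[OF smul_pair.module_hom_add[OF module_hom_comp[OF module_hom_mu module_hom_sm1]
        module_hom_comp[OF module_hom_s0 module_hom_d0]] smul.module_hom_ident])
    (simp add: mu_tens3 s0_tens3_E d0_ract d0_s0gen ract_diff ract_tens3 sm1_def)

section \<open>Commutation with left multiplication by x and yhat\<close>

context
  fixes h :: "'a::idom poly"
begin

lemma s0gen_Suc_left: "s0gen (Suc k) l = tens3 (E 0 0) Vx (E k l) + lact h xA (s0gen k l)"
  unfolding s0gen_def sum.lessThan_Suc_shift
  by (simp add: lact_add module_hom.sum[OF module_hom_lact] lact_tens3 add_ac del: sum.lessThan_Suc)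

lemma s0gen_Suc_right: "s0gen k (Suc l) = ract h (s0gen k l) yA + tens3 (E k l) Vy (E 0 0)"
proof -
  have "(\<Sum>j<l. tens3 (E k j) Vy (E 0 (Suc l - 1 - j)))
      = ract h (\<Sum>j<l. tens3 (E k j) Vy (E 0 (l - 1 - j))) yA"
    unfolding module_hom.sum[OF module_hom_ract]
    by (rule sum.cong) (auto simp: ract_tens3 Suc_diff_Suc)
  then show ?thesis
    by (simp add: s0gen_def ract_add module_hom.sum[OF module_hom_ract] ract_tens3 add_ac)
qed

lemma s0_lact_x: "s0 h (lact h xA t) = lact h xA (s0 h t) + tens3 (E 0 0) Vx (mu h t)"
  by (rule tens_eqI[OF module_hom_comp[OF module_hom_lact module_hom_s0]
        smul_pair.module_hom_add[OF module_hom_comp[OF module_hom_s0 module_hom_lact]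
          module_hom_comp[OF module_hom_mu module_hom_tens3_right]]])
    (simp add: lact_tens3 s0_tens3_E s0gen_Suc_left ract_add ract_tens3 lact_ract mu_tens3 add_ac)

lemma s1_lact_x: "s1 h (lact h xA t) = lact h xA (s1 h t)"
  by (rule tens_eqI[OF module_hom_comp[OF module_hom_lact module_hom_s1]
        module_hom_comp[OF module_hom_s1 module_hom_lact]])
    (simp add: lact_tens3 s1_tens3_E lact_lact split: vgen.split)

lemma s0_tens3_move_y:
  "s0 h (tens3 (amul h p yA) () c) = s0 h (tens3 p () (amul h yA c)) + tens3 p Vy c"
  by (rule module_hom_eqI_E[
        OF module_hom_comp[OF module_hom_comp[OF module_hom_amul_left module_hom_tens3_left]
          module_hom_s0]
        smul_pair.module_hom_add[OF module_hom_comp[OF module_hom_tens3_left module_hom_s0]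
          module_hom_tens3_left]])
    (simp add: s0_tens3_E s0gen_Suc_right ract_add ract_ract ract_tens3)

lemma Gmap_eq_poly_lin: "Gmap = poly_lin (\<lambda>k. \<Sum>i<k. tens3 (E i 0) Rr (E (k - 1 - i) 0 :: 'a alg))"
  by (simp add: fun_eq_iff Gmap_def poly_lin_def)

lemma module_hom_Gmap: "module_hom smult smul (Gmap :: 'a poly \<Rightarrow> _)"
  by (simp add: Gmap_eq_poly_lin module_hom_poly_lin)

lemma Gmap_monom: "Gmap (monom 1 k :: 'a poly) = (\<Sum>i<k. tens3 (E i 0) Rr (E (k - 1 - i) 0))"
  by (simp add: Gmap_eq_poly_lin poly_lin_monom)

lemma Gmap_one [simp]: "Gmap (1 :: 'a poly) = 0"
  by (simp add: Gmap_def)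

lemma Gmap_monom_Suc:
  "Gmap (monom 1 (Suc k) :: 'a poly) = tens3 (E 0 0) Rr (E k 0) + lact h xA (Gmap (monom 1 k))"
  unfolding Gmap_monom sum.lessThan_Suc_shift
  by (simp add: module_hom.sum[OF module_hom_lact] lact_tens3 del: sum.lessThan_Suc)

lemma Gmap_monom_add:
  "Gmap (monom 1 (a + b) :: 'a poly) =
     lact h (E a 0) (Gmap (monom 1 b)) + ract h (Gmap (monom 1 a)) (E b 0)"
proof (induction a)
  case 0
  then show ?case by (simp add: Gmap_monom)
next
  case (Suc a)
  have "Gmap (monom 1 (Suc a + b) :: 'a poly) =
      tens3 (E 0 0) Rr (E (a + b) 0) + lact h xA (Gmap (monom 1 (a + b)))"
    using Gmap_monom_Suc[of "a + b"] by simp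
  then show ?case
    unfolding Suc Gmap_monom_Suc
    by (simp add: lact_add ract_add ract_tens3 lact_lact lact_ract add_ac)
qed

lemma Gmap_mult: "Gmap (f * g) = lact h (polyA f) (Gmap g) + ract h (Gmap f) (polyA g)"
proof (rule module_hom_poly_eqI[where f = f])
  show "module_hom smult smul (\<lambda>f. Gmap (f * g))"
    by (rule module_hom_comp[OF module_hom_mult_right module_hom_Gmap])
  show "module_hom smult smul (\<lambda>f. lact h (polyA f) (Gmap g) + ract h (Gmap f) (polyA g))"
    by (intro smult_smul.module_hom_add module_hom_comp[OF module_hom_polyA module_hom_lact_left]
        module_hom_comp[OF module_hom_Gmap module_hom_ract])
  fix a
  show "Gmap (monom 1 a * g) =
      lact h (polyA (monom 1 a)) (Gmap g) + ract h (Gmap (monom 1 a)) (polyA g)"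
  proof (rule module_hom_poly_eqI[where f = g])
    show "module_hom smult smul (\<lambda>g. Gmap (monom 1 a * g :: 'a poly))"
      by (rule module_hom_comp[OF module_hom_mult_left module_hom_Gmap])
    show "module_hom smult smul
        (\<lambda>g. lact h (polyA (monom 1 a)) (Gmap g) + ract h (Gmap (monom 1 a)) (polyA g))"
      by (intro smult_smul.module_hom_add module_hom_comp[OF module_hom_Gmap module_hom_lact]
          module_hom_comp[OF module_hom_polyA module_hom_ract_right])
  qed (simp add: mult_monom Gmap_monom_add)
qed

lemma d0_d1gen: "d0 h (d1gen h) = 0"
proof -
  let ?P = "polyA h"
  have "d0 h (s0 h (tens3 ?P () (E 0 0))) = tens3 ?P () (E 0 0) - tens3 (E 0 0) () ?P"
    using sm1_mu_add_d0_s0[of h "tens3 ?P () (E 0 0)"] by (simp add: mu_tens3 sm1_def algebra_simps)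
  then show ?thesis
    by (simp add: d1gen_def module_hom.add[OF module_hom_d0] module_hom.diff[OF module_hom_d0]
        d0_tens3 amul_yA_xA module_hom.add[OF module_hom_tens3_left]
        module_hom.add[OF module_hom_tens3_right])
qed

lemma s0_tens3_x_mult:
  "s0 h (tens3 (amul h xA q) () c) = lact h xA (s0 h (tens3 q () c)) + tens3 (E 0 0) Vx (amul h q c)"
  using s0_lact_x[of "tens3 q () c"] by (simp add: lact_tens3 mu_tens3)

lemma s0_tens3_xpow_add:
  "s0 h (tens3 (E (a + k) 0) () c) =
     lact h (E a 0) (s0 h (tens3 (E k 0) () c)) + s0 h (tens3 (E a 0) () (amul h (E k 0) c))"
proof (induction a)
  case 0
  then show ?case by (simp add: s0_tens3_E s0gen_def)
next
  case (Suc a)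
  have "s0 h (tens3 (E (Suc a + k) 0) () c) = s0 h (tens3 (amul h xA (E (a + k) 0)) () c)"
    by simp
  also have "\<dots> =
      lact h xA (s0 h (tens3 (E (a + k) 0) () c)) + tens3 (E 0 0) Vx (amul h (E (a + k) 0) c)"
    by (rule s0_tens3_x_mult)
  also have "\<dots> = lact h (E (Suc a) 0) (s0 h (tens3 (E k 0) () c))
      + s0 h (tens3 (E (Suc a) 0) () (amul h (E k 0) c))"
    unfolding Suc using s0_tens3_x_mult[of "E a 0" "amul h (E k 0) c"]
    by (simp add: lact_add lact_lact amul_assoc[symmetric] add_ac)
  finally show ?case .
qed

lemma s0_tens3_polyA_mult:
  "s0 h (tens3 (amul h (polyA f) (E k 0)) () c) =
     lact h (polyA f) (s0 h (tens3 (E k 0) () c)) + s0 h (tens3 (polyA f) () (amul h (E k 0) c))"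
proof (rule module_hom_poly_eqI[where f = f])
  show "module_hom smult smul (\<lambda>f. s0 h (tens3 (amul h (polyA f) (E k 0)) () c))"
    by (intro module_hom_comp[OF _ module_hom_s0] module_hom_comp[OF _ module_hom_tens3_left]
        module_hom_comp[OF module_hom_polyA module_hom_amul_left])
  show "module_hom smult smul (\<lambda>f.
      lact h (polyA f) (s0 h (tens3 (E k 0) () c)) + s0 h (tens3 (polyA f) () (amul h (E k 0) c)))"
    by (intro smult_smul.module_hom_add module_hom_comp[OF module_hom_polyA module_hom_lact_left]
        module_hom_comp[OF _ module_hom_s0] module_hom_comp[OF module_hom_polyA module_hom_tens3_left])
qed (simp add: s0_tens3_xpow_add)

lemma d1_tens3_one:
  "d1 h (tens3 (E 0 0) Rr b) = tens3 (E 0 0) Vy (amul h xA b) + tens3 yA Vx b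
     - tens3 (E 0 0) Vx (amul h yA b) - tens3 xA Vy b - s0 h (tens3 (polyA h) () b)"
  by (simp add: d1_tens3 d1gen_def ract_add ract_diff ract_tens3 flip: s0_ract)

lemma Ghat_tens3_x_Suc: "Ghat h (tens3 (E (Suc k) 0) () c) =
    tens3 (E 0 0) Rr (amul h (E k 0) c) + lact h xA (Ghat h (tens3 (E k 0) () c))"
  by (simp add: Ghat_tens3_E Gmap_monom_Suc ract_add ract_tens3 lact_ract)

lemma Ghat_tens3_move_y:
  "Ghat h (tens3 (amul h (E k l) yA) () c) = Ghat h (tens3 (E k l) () (amul h yA c))"
  by (simp add: Ghat_tens3_E flip: amul_assoc)

lemma s0_tens3_y_mult_xpow:
  "s0 h (tens3 (amul h yA (E k 0)) () c) = lact h yA (s0 h (tens3 (E k 0) () c))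
     + tens3 (E 0 0) Vy (amul h (E k 0) c) - d1 h (Ghat h (tens3 (E k 0) () c))"
proof (induction k arbitrary: c)
  case 0
  show ?case by (simp add: s0_tens3_E s0gen_def Ghat_tens3_E Gmap_monom ract_tens3)
next
  case (Suc k)
  define b where "b = amul h (E k 0) c"
  define S where "S = s0 h (tens3 (E k 0) () c)"
  define Gk where "Gk = Ghat h (tens3 (E k 0) () c)"
  let ?P = "polyA h"
  have x_Suc: "E (Suc k) 0 = amul h xA (E k 0)" by simp
  have "s0 h (tens3 (amul h yA (E (Suc k) 0)) () c)
      = s0 h (tens3 (amul h xA (amul h yA (E k 0))) () c) + s0 h (tens3 (amul h ?P (E k 0)) () c)"
    by (simp only: x_Suc amul_yA_xA_left module_hom.add[OF module_hom_tens3_left]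
        module_hom.add[OF module_hom_s0])
  also have "\<dots> = lact h xA (lact h yA S + tens3 (E 0 0) Vy b - d1 h Gk)
      + tens3 (E 0 0) Vx (amul h yA b) + lact h ?P S + s0 h (tens3 ?P () b)"
    unfolding s0_tens3_x_mult Suc s0_tens3_polyA_mult S_def b_def Gk_def by (simp add: amul_assoc)
  also have "\<dots> = lact h yA (lact h xA S + tens3 (E 0 0) Vx b) + tens3 (E 0 0) Vy (amul h xA b)
      - d1 h (tens3 (E 0 0) Rr b + lact h xA Gk)"
    by (simp add: lact_add lact_diff lact_lact amul_yA_xA module_hom.add[OF module_hom_lact_left]
        lact_tens3 d1_tens3_one d1_lact module_hom.add[OF module_hom_d1])
  also have "\<dots> = lact h yA (s0 h (tens3 (E (Suc k) 0) () c))
      + tens3 (E 0 0) Vy (amul h (E (Suc k) 0) c) - d1 h (Ghat h (tens3 (E (Suc k) 0) () c))"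
  proof -
    have "s0 h (tens3 (E (Suc k) 0) () c) = lact h xA S + tens3 (E 0 0) Vx b"
      using s0_tens3_x_mult[of "E k 0" c] by (simp add: S_def b_def)
    moreover have "amul h (E (Suc k) 0) c = amul h xA b"
      by (simp add: b_def flip: amul_assoc)
    moreover have "Ghat h (tens3 (E (Suc k) 0) () c) = tens3 (E 0 0) Rr b + lact h xA Gk"
      by (simp add: Ghat_tens3_x_Suc b_def Gk_def)
    ultimately show ?thesis by (simp only:)
  qed
  finally show ?case .
qed

lemma s0_tens3_y_mult_E:
  "s0 h (tens3 (amul h yA (E k l)) () c) = lact h yA (s0 h (tens3 (E k l) () c))
     + tens3 (E 0 0) Vy (amul h (E k l) c) - d1 h (Ghat h (tens3 (E k l) () c))"
proof (induction l arbitrary: c)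
  case 0
  show ?case by (rule s0_tens3_y_mult_xpow)
next
  case (Suc l)
  have y_Suc: "E k (Suc l) = amul h (E k l) yA" by simp
  have y_Suc_c: "amul h (E k l) (amul h yA c) = amul h (E k (Suc l)) c" by (simp flip: amul_assoc)
  have "s0 h (tens3 (amul h yA (E k (Suc l))) () c)
      = s0 h (tens3 (amul h yA (E k l)) () (amul h yA c)) + tens3 (amul h yA (E k l)) Vy c"
    unfolding y_Suc amul_assoc[symmetric] by (rule s0_tens3_move_y)
  then show ?case
    unfolding Suc y_Suc s0_tens3_move_y Ghat_tens3_move_y
    by (simp add: y_Suc_c lact_add lact_tens3 algebra_simps)
qed

lemma s0_lact_y:
  "s0 h (lact h yA t) = lact h yA (s0 h t) + tens3 (E 0 0) Vy (mu h t) - d1 h (Ghat h t)"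
  by (rule tens_eqI[OF module_hom_comp[OF module_hom_lact module_hom_s0]
        smul_pair.module_hom_sub[
          OF smul_pair.module_hom_add[OF module_hom_comp[OF module_hom_s0 module_hom_lact]
            module_hom_comp[OF module_hom_mu module_hom_tens3_right]]
          module_hom_comp[OF module_hom_Ghat module_hom_d1]]])
    (simp add: lact_tens3 mu_tens3 s0_tens3_y_mult_E[simplified unit_eq])

lemma s1_tens3_poly_yhat:
  "s1 h (tens3 (poly_yhat f l) Vx c) = lact h (polyA f) (ract h (s1gen h l) c)"
  by (rule module_hom_poly_eqI[where f = f])
    (simp_all add: s1_tens3_E module_hom_comp[OF module_hom_polyA module_hom_lact_left]
      module_hom_comp[OF module_hom_poly_yhat module_hom_comp[OF module_hom_tens3_left module_hom_s1]])

lemma Ghat_tens3_poly_yhat: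
  "Ghat h (tens3 (poly_yhat g m) () c) = ract h (Gmap g) (amul h (E 0 m) c)"
  by (rule module_hom_poly_eqI[where f = g])
    (simp_all add: Ghat_tens3_E module_hom_comp[OF module_hom_Gmap module_hom_ract]
      module_hom_comp[OF module_hom_poly_yhat module_hom_comp[OF module_hom_tens3_left module_hom_Ghat]])

(* The recursion defining s1gen is made for this identity. *)
lemma Ghat_d0_tens3_x: "Ghat h (d0 h (tens3 (E k l) Vx c)) =
    lact h (E k 0) (ract h (s1gen h (Suc l) - lact h yA (s1gen h l)) c)"
proof -
  define g where "g j = (delta h ^^ j) [:0, 1:]" for j
  define C where "C j = (of_nat (l choose j) :: 'a)" for j
  define c' where "c' j = amul h (E 0 (l - j)) c" for j
  have G_left: "Ghat h (tens3 (amul h (E k l) xA) () c) = (\<Sum>j\<le>l. smul (C j)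
      (ract h (lact h (E k 0) (Gmap (g j))) (c' j)
        + ract h (Gmap (monom 1 k)) (amul h (polyA (g j)) (c' j))))"
    by (simp add: amul_E_xA module_hom.sum[OF module_hom_tens3_left]
        module_hom.scale[OF module_hom_tens3_left] module_hom.sum[OF module_hom_Ghat]
        module_hom.scale[OF module_hom_Ghat] Ghat_tens3_poly_yhat Gmap_mult ract_add ract_ract
        C_def g_def c'_def)
  have G_right: "Ghat h (tens3 (E k l) () (amul h xA c)) =
      (\<Sum>j\<le>l. smul (C j) (ract h (Gmap (monom 1 k)) (amul h (polyA (g j)) (c' j))))"
  proof -
    have "Ghat h (tens3 (E k l) () (amul h xA c)) =
        ract h (Gmap (monom 1 k)) (amul h (amul h (E 0 l) xA) c)"
      by (simp add: Ghat_tens3_E amul_assoc)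
    also have "amul h (E 0 l) xA = (\<Sum>j\<le>l. smul (C j) (poly_yhat (g j) (l - j)))"
      by (simp add: amul_E_xA C_def g_def)
    finally show ?thesis
      by (simp add: module_hom.sum[OF module_hom_amul_left] module_hom.scale[OF module_hom_amul_left]
          module_hom.sum[OF module_hom_ract_right] module_hom.scale[OF module_hom_ract_right]
          amul_poly_yhat_E0 c'_def)
  qed
  have "s1gen h (Suc l) - lact h yA (s1gen h l) =
      (\<Sum>j\<le>l. smul (C j) (ract h (Gmap (g j)) (E 0 (l - j))))"
    by (simp add: C_def g_def)
  then show ?thesis
    by (simp add: d0_tens3 module_hom.diff[OF module_hom_Ghat] G_left G_right
        smul.scale_right_distrib sum.distrib module_hom.sum[OF module_hom_ract]
        module_hom.scale[OF module_hom_ract] module_hom.sum[OF module_hom_lact]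
        module_hom.scale[OF module_hom_lact] ract_ract lact_ract c'_def)
qed

lemma s1_lact_y_tens3_x: "s1 h (lact h yA (tens3 (E k l) Vx c)) =
    lact h yA (s1 h (tens3 (E k l) Vx c)) + Ghat h (d0 h (tens3 (E k l) Vx c))"
proof -
  have yE: "amul h yA (E k l) = E k (Suc l) + poly_yhat (delta h (monom 1 k)) l"
    by (simp add: amul_yA_left lmul_y_E)
  have yE0: "amul h yA (E k 0) = amul h (E k 0) yA + polyA (delta h (monom 1 k))"
    by (simp add: amul_yA_left lmul_y_E polyA_eq_poly_yhat)
  show ?thesis
    by (simp add: lact_tens3 yE module_hom.add[OF module_hom_tens3_left]
        module_hom.add[OF module_hom_s1] s1_tens3_E s1_tens3_poly_yhat Ghat_d0_tens3_x lact_lact yE0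
        module_hom.add[OF module_hom_lact_left] lact_add ract_add lact_ract add_ac)
qed

lemma s1_lact_y: "s1 h (lact h yA t) = lact h yA (s1 h t) + Ghat h (d0 h t)"
proof (rule tens_eqI[OF module_hom_comp[OF module_hom_lact module_hom_s1]
      smul_pair.module_hom_add[OF module_hom_comp[OF module_hom_s1 module_hom_lact]
        module_hom_comp[OF module_hom_d0 module_hom_Ghat]]])
  fix k l v c
  show "s1 h (lact h yA (tens3 (E k l) v c)) =
      lact h yA (s1 h (tens3 (E k l) v c)) + Ghat h (d0 h (tens3 (E k l) v c))"
  proof (cases v)
    case Vx
    then show ?thesis by (simp only: s1_lact_y_tens3_x)
  next
    case Vy
    then show ?thesis
      by (simp add: lact_tens3 d0_tens3 module_hom.diff[OF module_hom_Ghat] flip: Ghat_tens3_move_y)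
  qed
qed

section \<open>The contracting homotopy\<close>

lemma s1_s0: "s1 h (s0 h t) = 0"
proof -
  have s1_s0gen: "s1 h (s0gen k l) = 0" for k l
    by (simp add: s0gen_def module_hom.add[OF module_hom_s1] module_hom.sum[OF module_hom_s1]
        s1_tens3_E)
  show ?thesis
    by (rule tens_eqI[OF module_hom_comp[OF module_hom_s0 module_hom_s1] smul_pair.module_hom_zero])
      (simp add: s0_tens3_E s1_ract s1_s0gen)
qed

lemma s1_d1gen: "s1 h (d1gen h) = tens3 (E 0 0) Rr (E 0 0)"
  by (simp add: d1gen_def module_hom.add[OF module_hom_s1] module_hom.diff[OF module_hom_s1]
      s1_tens3_E s1_s0 Gmap_monom flip: monom_1_Suc_0)

lemma s1_lact_d1gen: "s1 h (lact h (E k l) (d1gen h)) = tens3 (E k l) Rr (E 0 0)"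
proof (induction k)
  case 0
  show ?case
  proof (induction l)
    case 0
    then show ?case by (simp add: s1_d1gen)
  next
    case (Suc l)
    have "lact h (E 0 (Suc l)) (d1gen h) = lact h yA (lact h (E 0 l) (d1gen h))"
      by (simp add: lact_lact)
    then show ?case
      by (simp add: s1_lact_y Suc d0_lact d0_d1gen lact_tens3 module_hom.zero[OF module_hom_Ghat])
  qed
next
  case (Suc k)
  have "lact h (E (Suc k) l) (d1gen h) = lact h xA (lact h (E k l) (d1gen h))"
    by (simp add: lact_lact)
  then show ?case
    by (simp add: s1_lact_x Suc lact_tens3)
qed

lemma s1_d1: "s1 h (d1 h t) = t"
proof (rule tens_eqI[OF module_hom_comp[OF module_hom_d1 module_hom_s1] smul.module_hom_ident])
  fix k l c and r :: rgen
  show "s1 h (d1 h (tens3 (E k l) r c)) = tens3 (E k l) r c"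
    by (cases r) (simp add: d1_tens3 lact_ract s1_ract s1_lact_d1gen ract_tens3)
qed

lemma s0_d0_add_d1_s1_lact_x:
  "s0 h (d0 h (lact h xA t)) + d1 h (s1 h (lact h xA t)) =
     lact h xA (s0 h (d0 h t) + d1 h (s1 h t))"
  by (simp add: d0_lact s0_lact_x mu_d0 s1_lact_x d1_lact lact_add)

lemma s0_d0_add_d1_s1_lact_y:
  "s0 h (d0 h (lact h yA t)) + d1 h (s1 h (lact h yA t)) =
     lact h yA (s0 h (d0 h t) + d1 h (s1 h t))"
  by (simp add: d0_lact s0_lact_y mu_d0 s1_lact_y d1_lact lact_add module_hom.add[OF module_hom_d1])

lemma s0_d0_add_d1_s1_tens3_one:
  "s0 h (d0 h (tens3 (E 0 0) v c)) + d1 h (s1 h (tens3 (E 0 0) v c)) = tens3 (E 0 0) v c"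
  by (cases v)
    (simp_all add: d0_tens3 module_hom.diff[OF module_hom_s0] s0_tens3_E s0gen_def ract_tens3
      s1_tens3_E)

lemma s0_d0_add_d1_s1: "s0 h (d0 h t) + d1 h (s1 h t) = t"
proof (rule tens_eqI[OF smul_pair.module_hom_add[OF module_hom_comp[OF module_hom_d0 module_hom_s0]
      module_hom_comp[OF module_hom_s1 module_hom_d1]] smul.module_hom_ident])
  fix k l v c
  have "s0 h (d0 h (tens3 (E 0 l) v c)) + d1 h (s1 h (tens3 (E 0 l) v c)) = tens3 (E 0 l) v c"
  proof (induction l)
    case 0
    show ?case by (rule s0_d0_add_d1_s1_tens3_one)
  next
    case (Suc l)
    have "tens3 (E 0 (Suc l)) v c = lact h yA (tens3 (E 0 l) v c)"
      by (simp add: lact_tens3)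
    then show ?case by (simp only: s0_d0_add_d1_s1_lact_y Suc)
  qed
  then show "s0 h (d0 h (tens3 (E k l) v c)) + d1 h (s1 h (tens3 (E k l) v c)) = tens3 (E k l) v c"
  proof (induction k)
    case 0
    then show ?case .
  next
    case (Suc k)
    have "tens3 (E (Suc k) l) v c = lact h xA (tens3 (E k l) v c)"
      by (simp add: lact_tens3)
    then show ?case using Suc by (simp only: s0_d0_add_d1_s1_lact_x)
  qed
qed

end

theorem theorem4p7:
  fixes h :: "'a::field poly"
  assumes "h \<noteq> 0"
  shows "(\<forall>a :: 'a alg. mu h (sm1 a) = a)
       \<and> (\<forall>t :: ('a, unit) tens. sm1 (mu h t) + d0 h (s0 h t) = t)
       \<and> (\<forall>t :: ('a, vgen) tens. s0 h (d0 h t) + d1 h (s1 h t) = t)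
       \<and> (\<forall>t :: ('a, rgen) tens. s1 h (d1 h t) = t)"
  by (simp add: mu_sm1 sm1_mu_add_d0_s0 s0_d0_add_d1_s1 s1_d1)

end
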